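(* Let $d\ge2$, let $(c_t)_{t\ge0}\subset\mathbb{S}^d$ be an arbitrary sequence of unit vectors, and let $\omega:\mathrm{P}^d_+\to\mathbb{R}_{\ge0}$ satisfy $\omega(X)\le C\sqrt{\lambda_{\max}(X)}$ for all $X\in\mathrm{P}^d_+$, for some constant $C>0$. Let $$\lambda_0\ge\max\Big\{2,\ \sqrt{\tfrac{2}{3(d-1)}}\,2dC+\tfrac{2}{3(d-1)}\Big\},$$ and define $V_0=\lambda_0 I_{d\times d}$ and $V_{t+1}=V_t+\omega(V_t)\sum_{i=1}^{d-1}P_{t,i}$, where $$P_{t,i}=a^+_{t+1,i}(a^+_{t+1,i})^{\mathsf T}+a^-_{t+1,i}(a^-_{t+1,i})^{\mathsf T},\quad a^\pm_{t+1,i}=\frac{\tilde a^\pm_{t+1,i}}{\|\tilde a^\pm_{t+1,i}\|_2},\quad \tilde a^\pm_{t+1,i}=c_t\pm\frac{1}{\sqrt{\lambda_{t,1}}}v_{t,i},$$ with $\lambda_{t,1}\le\dots\le\lambda_{t,d}$ the eigenvalues of $V_t$ and $v_{t,1},\dots,v_{t,d}$ corresponding orthonormal eigenvectors (for any choice of such eigenvectors). Then $$\lambda_{\min}(V_t)\ge\sqrt{\tfrac{2}{3(d-1)}\lambda_{\max}(V_t)}\quad\text{for all }t\ge0.$$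
   Context: $\mathbb{S}^d=\{x\in\mathbb{R}^d:\|x\|_2=1\}$; $\mathrm{P}^d_+$ is the set of real symmetric positive semidefinite $d\times d$ matrices; $\lambda_{\min},\lambda_{\max}$ denote smallest and largest eigenvalues. *)

theory Defs
  imports "HOL-Analysis.Analysis"
begin

definition psd :: "real^'n^'n \<Rightarrow> bool" where
  "psd A \<longleftrightarrow> transpose A = A \<and> (\<forall>x. 0 \<le> x \<bullet> (A *v x))"

definition eigvals :: "real^'n^'n \<Rightarrow> real set" where
  "eigvals A = {\<mu>. \<exists>x. x \<noteq> 0 \<and> A *v x = \<mu> *\<^sub>R x}"

definition lambda_min :: "real^'n^'n \<Rightarrow> real" where
  "lambda_min A = Inf (eigvals A)"

definition lambda_max :: "real^'n^'n \<Rightarrow> real" where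
  "lambda_max A = Sup (eigvals A)"

definition outer :: "real^'n \<Rightarrow> real^'n \<Rightarrow> real^'n^'n" where
  "outer a b = (\<chi> i j. a $ i * b $ j)"

definition sorted_eigensystem ::
  "real^'n^'n \<Rightarrow> (nat \<Rightarrow> real) \<Rightarrow> (nat \<Rightarrow> real^'n) \<Rightarrow> bool" where
  "sorted_eigensystem A lam v \<longleftrightarrow>
     (\<forall>i\<in>{1..CARD('n)}. \<forall>j\<in>{1..CARD('n)}. v i \<bullet> v j = (if i = j then 1 else 0)) \<and>
     (\<forall>i\<in>{1..CARD('n)}. A *v v i = lam i *\<^sub>R v i) \<and>
     (\<forall>i j. 1 \<le> i \<longrightarrow> i \<le> j \<longrightarrow> j \<le> CARD('n) \<longrightarrow> lam i \<le> lam j)"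

definition Pmat :: "real^'n \<Rightarrow> real \<Rightarrow> real^'n \<Rightarrow> real^'n^'n" where
  "Pmat c l1 w =
     (let ap = c + (1 / sqrt l1) *\<^sub>R w; am = c - (1 / sqrt l1) *\<^sub>R w;
          bp = (1 / norm ap) *\<^sub>R ap; bm = (1 / norm am) *\<^sub>R am
      in outer bp bp + outer bm bm)"

end

theory Submission
  imports Defs
begin

text \<open>
  Write \<open>a\<close> and \<open>b\<close> for the smallest and largest eigenvalue of \<open>V\<^sub>t\<close> and
  \<open>k = 2 / (3 (d - 1))\<close>; the invariant is \<open>\<lambda>\<^sub>0 \<le> a\<close> and \<open>k b \<le> a\<^sup>2\<close>.
  In the quadratic form of \<open>P\<^sub>t\<^sub>,\<^sub>i\<close> the cross terms between \<open>c\<^sub>t\<close> and \<open>v\<^sub>t\<^sub>,\<^sub>i\<close> cancel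
  in the sum of the two squares, and normalisation divides by at most \<open>(1 + 1/\<surd>a)\<^sup>2\<close>, so it
  is at least \<open>2 (v\<^sub>t\<^sub>,\<^sub>i \<bullet> x)\<^sup>2 / (\<surd>a + 1)\<^sup>2\<close>; it is at most \<open>2 \<parallel>x\<parallel>\<^sup>2\<close>.
  Hence the new smallest eigenvalue is at least \<open>min (a + 2\<omega> / (\<surd>a + 1)\<^sup>2) b\<close> and the new
  largest one at most \<open>b + 2 (d - 1) \<omega>\<close>, which raises \<open>k b\<close> by at most \<open>4\<omega>/3\<close>.
  If the minimum is the first term, the cross term \<open>2 a \<cdot> 2\<omega> / (\<surd>a + 1)\<^sup>2\<close> of its square pays
  for this because \<open>(\<surd>a + 1)\<^sup>2 \<le> 3 a\<close> for \<open>a \<ge> 2\<close>; otherwise \<open>\<omega> \<le> C \<surd>b\<close> and the lower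
  bound on \<open>\<lambda>\<^sub>0\<close> give \<open>b\<^sup>2 \<ge> k b + 4\<omega>/3\<close>.
\<close>

lemma matrix_vector_mult_sum_left:
  fixes f :: "'a \<Rightarrow> real^'n^'m"
  shows "(\<Sum>i\<in>S. f i) *v x = (\<Sum>i\<in>S. f i *v x)"
proof (induction S rule: infinite_finite_induct)
  case (insert a A)
  then show ?case by (simp add: matrix_vector_mult_add_rdistrib)
qed simp_all

lemma outer_self_quadratic_form: "x \<bullet> (outer b b *v x) = (b \<bullet> x)\<^sup>2"
  for b x :: "real^'n"
  by (simp add: outer_def matrix_vector_mult_def inner_vec_def sum_distrib_left
      power2_eq_square mult_ac)

lemma symmetric_matrix_by_inner:
  fixes A :: "real^'n^'n"
  assumes "\<And>x y. y \<bullet> (A *v x) = x \<bullet> (A *v y)"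
  shows "transpose A = A"
proof (rule matrix_eq[THEN iffD2], rule allI)
  fix y :: "real^'n"
  have "x \<bullet> (transpose A *v y) = x \<bullet> (A *v y)" for x
    by (metis assms dot_lmul_matrix inner_commute vector_transpose_matrix)
  then show "transpose A *v y = A *v y"
    using vector_eq_ldot by blast
qed

lemma sorted_eigensystemD:
  fixes A :: "real^'n^'n"
  assumes "sorted_eigensystem A l w"
  shows sorted_eigensystem_orthonormal:
      "\<lbrakk>i \<in> {1..CARD('n)}; j \<in> {1..CARD('n)}\<rbrakk> \<Longrightarrow> w i \<bullet> w j = (if i = j then 1 else 0)"
    and sorted_eigensystem_eigenvector: "i \<in> {1..CARD('n)} \<Longrightarrow> A *v w i = l i *\<^sub>R w i"
    and sorted_eigensystem_mono: "\<lbrakk>1 \<le> i; i \<le> j; j \<le> CARD('n)\<rbrakk> \<Longrightarrow> l i \<le> l j"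
  using assms unfolding sorted_eigensystem_def by blast+

lemma sorted_eigensystem_norm:
  fixes A :: "real^'n^'n"
  assumes "sorted_eigensystem A l w" "i \<in> {1..CARD('n)}"
  shows "norm (w i) = 1"
  using sorted_eigensystem_orthonormal[OF assms(1,2,2)] by (simp add: norm_eq_sqrt_inner)

lemma sorted_eigensystem_expansion:
  fixes A :: "real^'n^'n"
  assumes es: "sorted_eigensystem A l w"
  shows "(\<Sum>i=1..CARD('n). (w i \<bullet> x) *\<^sub>R w i) = x"
proof -
  let ?I = "{1..CARD('n)}"
  have on: "\<And>i j. i \<in> ?I \<Longrightarrow> j \<in> ?I \<Longrightarrow> w i \<bullet> w j = (if i = j then 1 else 0)"
    using sorted_eigensystem_orthonormal[OF es] by blast
  have inj: "inj_on w ?I"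
    by (rule inj_onI) (metis on zero_neq_one)
  have po: "pairwise orthogonal (w ` ?I)"
    unfolding pairwise_def orthogonal_def using on by auto
  have "independent (w ` ?I)"
    by (rule pairwise_orthogonal_independent[OF po]) (use on in fastforce)
  moreover have "card (w ` ?I) = CARD('n)"
    using inj by (simp add: card_image)
  ultimately have "x \<in> span (w ` ?I)"
    using card_eq_dim[of "w ` ?I" UNIV] by auto
  then have "(\<Sum>u\<in>w ` ?I. (x \<bullet> u) *\<^sub>R u) = x"
    using orthonormal_basis_expand[OF po] sorted_eigensystem_norm[OF es] by blast
  then show ?thesis
    unfolding sum.reindex[OF inj] by (simp add: inner_commute[of x])
qed

lemma sorted_eigensystem_bilinear_form:
  fixes A :: "real^'n^'n"
  assumes es: "sorted_eigensystem A l w"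
  shows "y \<bullet> (A *v x) = (\<Sum>i=1..CARD('n). l i * (w i \<bullet> x) * (w i \<bullet> y))"
proof -
  have "A *v x = (\<Sum>i=1..CARD('n). (w i \<bullet> x) *\<^sub>R (A *v w i))"
    by (subst (1) sorted_eigensystem_expansion[OF es, of x, symmetric])
       (simp add: linear_sum[OF matrix_vector_mul_linear] matrix_vector_mult_scaleR)
  also have "\<dots> = (\<Sum>i=1..CARD('n). (l i * (w i \<bullet> x)) *\<^sub>R w i)"
    by (rule sum.cong) (simp_all add: sorted_eigensystem_eigenvector[OF es])
  finally show ?thesis
    by (simp add: inner_sum_right inner_commute mult_ac)
qed

lemma sorted_eigensystem_quadratic_form:
  fixes A :: "real^'n^'n"
  assumes "sorted_eigensystem A l w"
  shows "x \<bullet> (A *v x) = (\<Sum>i=1..CARD('n). l i * (w i \<bullet> x)\<^sup>2)"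
  by (simp add: sorted_eigensystem_bilinear_form[OF assms] power2_eq_square mult.assoc)

lemma sorted_eigensystem_norm_sq:
  fixes A :: "real^'n^'n"
  assumes "sorted_eigensystem A l w"
  shows "x \<bullet> x = (\<Sum>i=1..CARD('n). (w i \<bullet> x)\<^sup>2)"
proof -
  have "x \<bullet> x = x \<bullet> (\<Sum>i=1..CARD('n). (w i \<bullet> x) *\<^sub>R w i)"
    by (simp only: sorted_eigensystem_expansion[OF assms])
  also have "\<dots> = (\<Sum>i=1..CARD('n). (w i \<bullet> x) * (x \<bullet> w i))"
    by (simp add: inner_sum_right)
  finally show ?thesis
    by (simp add: power2_eq_square inner_commute[of x "w i" for i])
qed

lemma sorted_eigensystem_rayleigh_bounds:
  fixes A :: "real^'n^'n"
  assumes es: "sorted_eigensystem A l w"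
  shows "l 1 * (x \<bullet> x) \<le> x \<bullet> (A *v x)" and "x \<bullet> (A *v x) \<le> l CARD('n) * (x \<bullet> x)"
  unfolding sorted_eigensystem_quadratic_form[OF es] sorted_eigensystem_norm_sq[OF es]
    sum_distrib_left
  by (auto intro!: sum_mono mult_right_mono sorted_eigensystem_mono[OF es])

lemma sorted_eigensystem_eigenvalue:
  fixes A :: "real^'n^'n"
  assumes es: "sorted_eigensystem A l w" and i: "i \<in> {1..CARD('n)}"
  shows "w i \<bullet> (A *v w i) = l i"
  using sorted_eigensystem_orthonormal[OF es i i] by (simp add: sorted_eigensystem_eigenvector[OF es i])

lemma sorted_eigensystem_eigvals:
  fixes A :: "real^'n^'n"
  assumes es: "sorted_eigensystem A l w"
  shows "l ` {1..CARD('n)} \<subseteq> eigvals A" and "eigvals A \<subseteq> {l 1..l CARD('n)}"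
proof
  fix \<mu> assume "\<mu> \<in> l ` {1..CARD('n)}"
  then obtain i where i: "i \<in> {1..CARD('n)}" and \<mu>: "\<mu> = l i"
    by blast
  have "w i \<noteq> 0"
    using sorted_eigensystem_norm[OF es i] by auto
  then show "\<mu> \<in> eigvals A"
    unfolding eigvals_def \<mu> using sorted_eigensystem_eigenvector[OF es i] by blast
next
  show "eigvals A \<subseteq> {l 1..l CARD('n)}"
  proof
    fix \<mu> assume "\<mu> \<in> eigvals A"
    then obtain x where x: "x \<noteq> 0" "A *v x = \<mu> *\<^sub>R x"
      unfolding eigvals_def by blast
    then have "x \<bullet> (A *v x) = \<mu> * (x \<bullet> x)" and pos: "0 < x \<bullet> x"
      by simp_all
    then have "l 1 * (x \<bullet> x) \<le> \<mu> * (x \<bullet> x)" and "\<mu> * (x \<bullet> x) \<le> l CARD('n) * (x \<bullet> x)"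
      using sorted_eigensystem_rayleigh_bounds[OF es, of x] by simp_all
    then show "\<mu> \<in> {l 1..l CARD('n)}"
      using pos by simp
  qed
qed

lemma sorted_eigensystem_lambda_min:
  fixes A :: "real^'n^'n"
  assumes "sorted_eigensystem A l w"
  shows "lambda_min A = l 1"
proof -
  have "l 1 \<in> eigvals A" and "\<forall>\<mu>\<in>eigvals A. l 1 \<le> \<mu>"
    using sorted_eigensystem_eigvals[OF assms] by force+
  then show ?thesis
    unfolding lambda_min_def by (intro cInf_eq_minimum) auto
qed

lemma sorted_eigensystem_lambda_max:
  fixes A :: "real^'n^'n"
  assumes "sorted_eigensystem A l w"
  shows "lambda_max A = l CARD('n)"
proof -
  have "l CARD('n) \<in> eigvals A" and "\<forall>\<mu>\<in>eigvals A. \<mu> \<le> l CARD('n)"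
    using sorted_eigensystem_eigvals[OF assms] by force+
  then show ?thesis
    unfolding lambda_max_def by (intro cSup_eq_maximum) auto
qed

lemma sorted_eigensystem_psd:
  fixes A :: "real^'n^'n"
  assumes es: "sorted_eigensystem A l w" and "0 \<le> l 1"
  shows "psd A"
  unfolding psd_def
proof
  show "transpose A = A"
    by (rule symmetric_matrix_by_inner) (simp add: sorted_eigensystem_bilinear_form[OF es] ac_simps)
  show "\<forall>x. 0 \<le> x \<bullet> (A *v x)"
  proof
    fix x :: "real^'n"
    have "0 \<le> l 1 * (x \<bullet> x)"
      using assms(2) by simp
    then show "0 \<le> x \<bullet> (A *v x)"
      using sorted_eigensystem_rayleigh_bounds(1)[OF es, of x] by linarith
  qed
qed

lemma sorted_eigensystem_scalar_matrix:
  fixes w :: "nat \<Rightarrow> real^'n"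
  assumes es: "sorted_eigensystem (\<mu> *\<^sub>R mat 1) l w" and i: "i \<in> {1..CARD('n)}"
  shows "l i = \<mu>"
proof -
  have "(\<mu> *\<^sub>R mat 1) *v w i = \<mu> *\<^sub>R w i"
    by (metis scaleR_matrix_vector_assoc matrix_vector_mul_lid)
  then show ?thesis
    using sorted_eigensystem_eigenvalue[OF es i] sorted_eigensystem_orthonormal[OF es i i] by simp
qed

lemma inner_normalized_sq_le: "(((1 / norm a) *\<^sub>R a) \<bullet> x)\<^sup>2 \<le> x \<bullet> x"
  for a x :: "'a::real_inner"
proof -
  have "\<bar>((1 / norm a) *\<^sub>R a) \<bullet> x\<bar> \<le> norm x"
    using Cauchy_Schwarz_ineq2[of "(1 / norm a) *\<^sub>R a" x] by (cases "a = 0") simp_all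
  then show ?thesis
    by (metis abs_ge_zero power2_abs power_mono power2_norm_eq_inner)
qed

lemma inner_normalized_sq_ge:
  fixes a x :: "'a::real_inner"
  assumes "norm a \<le> N"
  shows "(a \<bullet> x)\<^sup>2 / N\<^sup>2 \<le> (((1 / norm a) *\<^sub>R a) \<bullet> x)\<^sup>2"
proof (cases "a = 0")
  case False
  then have "0 < norm a" by simp
  then have "(a \<bullet> x)\<^sup>2 / N\<^sup>2 \<le> (a \<bullet> x)\<^sup>2 / (norm a)\<^sup>2"
    using assms by (intro divide_left_mono power_mono mult_pos_pos) auto
  then show ?thesis
    by (simp add: power_divide)
qed simp

lemma Pmat_quadratic_form:
  fixes c w x :: "real^'n"
  shows "x \<bullet> (Pmat c l1 w *v x) =
    (((1 / norm (c + (1 / sqrt l1) *\<^sub>R w)) *\<^sub>R (c + (1 / sqrt l1) *\<^sub>R w)) \<bullet> x)\<^sup>2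
    + (((1 / norm (c - (1 / sqrt l1) *\<^sub>R w)) *\<^sub>R (c - (1 / sqrt l1) *\<^sub>R w)) \<bullet> x)\<^sup>2"
  unfolding Pmat_def Let_def matrix_vector_mult_add_rdistrib inner_add_right
    outer_self_quadratic_form ..

lemma Pmat_quadratic_form_le: "x \<bullet> (Pmat c l1 w *v x) \<le> 2 * (x \<bullet> x)"
  for c w x :: "real^'n"
  unfolding Pmat_quadratic_form using inner_normalized_sq_le[of _ x] by (smt (verit))

lemma Pmat_quadratic_form_ge:
  fixes c w x :: "real^'n"
  assumes c: "norm c = 1" and w: "norm w = 1" and "0 < l1"
  shows "2 * (w \<bullet> x)\<^sup>2 / (sqrt l1 + 1)\<^sup>2 \<le> x \<bullet> (Pmat c l1 w *v x)"
proof -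
  define s where "s = 1 / sqrt l1"
  have "0 < s"
    using \<open>0 < l1\<close> by (simp add: s_def)
  have "norm (c + s *\<^sub>R w) \<le> 1 + s" and "norm (c - s *\<^sub>R w) \<le> 1 + s"
    using norm_triangle_ineq[of c "s *\<^sub>R w"] norm_triangle_ineq4[of c "s *\<^sub>R w"] c w \<open>0 < s\<close>
    by simp_all
  from this[THEN inner_normalized_sq_ge, of x]
  have "((c + s *\<^sub>R w) \<bullet> x)\<^sup>2 / (1 + s)\<^sup>2 + ((c - s *\<^sub>R w) \<bullet> x)\<^sup>2 / (1 + s)\<^sup>2
      \<le> x \<bullet> (Pmat c l1 w *v x)"
    unfolding Pmat_quadratic_form s_def by linarith
  moreover have "((c + s *\<^sub>R w) \<bullet> x)\<^sup>2 + ((c - s *\<^sub>R w) \<bullet> x)\<^sup>2 \<ge> 2 * (s * (w \<bullet> x))\<^sup>2"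
    by (simp add: inner_add_left inner_diff_left power2_eq_square algebra_simps)
  moreover have "2 * (s * (w \<bullet> x))\<^sup>2 / (1 + s)\<^sup>2 = 2 * (w \<bullet> x)\<^sup>2 / (sqrt l1 + 1)\<^sup>2"
    using \<open>0 < l1\<close> by (simp add: s_def field_simps)
  ultimately show ?thesis
    by (smt (verit) add_divide_distrib divide_right_mono zero_le_power2)
qed

lemma update_quadratic_form:
  fixes A :: "real^'n^'n" and c x :: "real^'n"
  shows "x \<bullet> ((A + \<omega> *\<^sub>R (\<Sum>i\<in>I. Pmat c l1 (w i))) *v x)
    = x \<bullet> (A *v x) + \<omega> * (\<Sum>i\<in>I. x \<bullet> (Pmat c l1 (w i) *v x))"
  by (simp add: matrix_vector_mult_add_rdistrib matrix_vector_mult_sum_left inner_add_right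
      inner_sum_right flip: scaleR_matrix_vector_assoc)

lemma update_rayleigh_upper:
  fixes A :: "real^'n^'n" and c x :: "real^'n"
  assumes es: "sorted_eigensystem A l w" and "0 \<le> \<omega>" and "x \<bullet> x = 1"
  shows "x \<bullet> ((A + \<omega> *\<^sub>R (\<Sum>i=1..CARD('n)-1. Pmat c (l 1) (w i))) *v x)
    \<le> l CARD('n) + 2 * (real CARD('n) - 1) * \<omega>"
proof -
  have "(\<Sum>i=1..CARD('n)-1. x \<bullet> (Pmat c (l 1) (w i) *v x)) \<le> (\<Sum>i=1..CARD('n)-1. 2)"
    by (rule sum_mono) (metis Pmat_quadratic_form_le \<open>x \<bullet> x = 1\<close> mult.right_neutral)
  also have "\<dots> = 2 * (real CARD('n) - 1)"
    by (simp add: of_nat_diff Suc_leI)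
  finally have "\<omega> * (\<Sum>i=1..CARD('n)-1. x \<bullet> (Pmat c (l 1) (w i) *v x))
      \<le> \<omega> * (2 * (real CARD('n) - 1))"
    using \<open>0 \<le> \<omega>\<close> by (rule mult_left_mono)
  also have "\<dots> = 2 * (real CARD('n) - 1) * \<omega>"
    by simp
  finally show ?thesis
    unfolding update_quadratic_form
    using sorted_eigensystem_rayleigh_bounds(2)[OF es, of x] \<open>x \<bullet> x = 1\<close> by simp
qed

lemma update_rayleigh_lower:
  fixes A :: "real^'n^'n" and c x :: "real^'n"
  assumes es: "sorted_eigensystem A l w" and c: "norm c = 1" and "0 < l 1" and "0 \<le> \<omega>"
    and "x \<bullet> x = 1"
  shows "min (l 1 + 2 * \<omega> / (sqrt (l 1) + 1)\<^sup>2) (l CARD('n))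
    \<le> x \<bullet> ((A + \<omega> *\<^sub>R (\<Sum>i=1..CARD('n)-1. Pmat c (l 1) (w i))) *v x)"
    (is "?m \<le> _")
proof -
  let ?d = "CARD('n)" and ?\<delta> = "2 * \<omega> / (sqrt (l 1) + 1)\<^sup>2"
  define s where "s i = (w i \<bullet> x)\<^sup>2" for i
  have split_last: "(\<Sum>i=1..?d. f i) = (\<Sum>i=1..?d-1. f i) + f ?d" for f :: "nat \<Rightarrow> real"
    by (cases ?d) auto
  have "(\<Sum>i=1..?d-1. ?\<delta> * s i) \<le> \<omega> * (\<Sum>i=1..?d-1. x \<bullet> (Pmat c (l 1) (w i) *v x))"
    unfolding sum_distrib_left
  proof (rule sum_mono)
    fix i assume "i \<in> {1..?d-1}"
    then have "i \<in> {1..?d}"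
      by auto
    then have "2 * s i / (sqrt (l 1) + 1)\<^sup>2 \<le> x \<bullet> (Pmat c (l 1) (w i) *v x)"
      unfolding s_def
      by (rule Pmat_quadratic_form_ge[OF c sorted_eigensystem_norm[OF es] \<open>0 < l 1\<close>])
    then show "?\<delta> * s i \<le> \<omega> * (x \<bullet> (Pmat c (l 1) (w i) *v x))"
      using mult_left_mono[OF _ \<open>0 \<le> \<omega>\<close>] by (fastforce simp: field_simps)
  qed
  moreover have "(\<Sum>i=1..?d-1. ?m * s i) \<le> (\<Sum>i=1..?d-1. l i * s i + ?\<delta> * s i)"
  proof (rule sum_mono)
    fix i assume "i \<in> {1..?d-1}"
    then have "l 1 \<le> l i"
      using sorted_eigensystem_mono[OF es, of 1 i] by auto
    then have "?m \<le> l i + ?\<delta>"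
      by (simp add: min_le_iff_disj)
    then show "?m * s i \<le> l i * s i + ?\<delta> * s i"
      unfolding s_def by (metis distrib_right mult_right_mono zero_le_power2)
  qed
  \<comment> \<open>\<open>w ?d\<close> receives no \<open>Pmat\<close> term, hence the cap \<open>l ?d\<close> in the minimum\<close>
  moreover have "?m * s ?d \<le> l ?d * s ?d"
    unfolding s_def by (intro mult_right_mono) auto
  moreover have "(\<Sum>i=1..?d. ?m * s i) = ?m"
    using sorted_eigensystem_norm_sq[OF es, of x] \<open>x \<bullet> x = 1\<close>
    by (simp add: s_def flip: sum_distrib_left)
  ultimately show ?thesis
    unfolding update_quadratic_form sorted_eigensystem_quadratic_form[OF es] s_def[symmetric]
    unfolding split_last[of "\<lambda>i. ?m * s i"] split_last[of "\<lambda>i. l i * s i"] sum.distrib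
    by linarith
qed

lemma update_eigenvalue_bounds:
  fixes A B :: "real^'n^'n" and c :: "real^'n"
  assumes es: "sorted_eigensystem A l w" and es': "sorted_eigensystem B l' w'"
    and B: "B = A + \<omega> *\<^sub>R (\<Sum>i=1..CARD('n)-1. Pmat c (l 1) (w i))"
    and c: "norm c = 1" and "0 < l 1" and "0 \<le> \<omega>"
  shows "min (l 1 + 2 * \<omega> / (sqrt (l 1) + 1)\<^sup>2) (l CARD('n)) \<le> l' 1"
    and "l' CARD('n) \<le> l CARD('n) + 2 * (real CARD('n) - 1) * \<omega>"
proof -
  have 1: "1 \<in> {1..CARD('n)}" and d: "CARD('n) \<in> {1..CARD('n)}"
    by auto
  have "min (l 1 + 2 * \<omega> / (sqrt (l 1) + 1)\<^sup>2) (l CARD('n)) \<le> w' 1 \<bullet> (B *v w' 1)"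
    unfolding B using sorted_eigensystem_orthonormal[OF es' 1 1]
    by (intro update_rayleigh_lower[OF es c \<open>0 < l 1\<close> \<open>0 \<le> \<omega>\<close>]) simp
  then show "min (l 1 + 2 * \<omega> / (sqrt (l 1) + 1)\<^sup>2) (l CARD('n)) \<le> l' 1"
    by (simp only: sorted_eigensystem_eigenvalue[OF es' 1])
  have "w' CARD('n) \<bullet> (B *v w' CARD('n)) \<le> l CARD('n) + 2 * (real CARD('n) - 1) * \<omega>"
    unfolding B using sorted_eigensystem_orthonormal[OF es' d d]
    by (intro update_rayleigh_upper[OF es \<open>0 \<le> \<omega>\<close>]) simp
  then show "l' CARD('n) \<le> l CARD('n) + 2 * (real CARD('n) - 1) * \<omega>"
    by (simp only: sorted_eigensystem_eigenvalue[OF es' d])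
qed

lemma sqrt_plus_one_sq_le:
  fixes a :: real
  assumes "2 \<le> a"
  shows "(sqrt a + 1)\<^sup>2 \<le> 3 * a"
proof -
  define s where "s = sqrt a"
  have "s\<^sup>2 = a"
    using assms by (simp add: s_def)
  have "1.4 \<le> s"
    unfolding s_def by (rule real_le_rsqrt) (use assms in \<open>simp add: power2_eq_square\<close>)
  then have "1.4 * 0.4 \<le> s * (s - 1)"
    by (intro mult_mono) auto
  then show ?thesis
    using \<open>s\<^sup>2 = a\<close> by (simp add: s_def[symmetric] power2_eq_square algebra_simps)
qed

lemma sq_growth_interior:
  fixes a b k \<omega> :: real
  assumes "2 \<le> a" and "k * b \<le> a\<^sup>2" and "0 \<le> \<omega>"
  shows "k * b + 4/3 * \<omega> \<le> (a + 2 * \<omega> / (sqrt a + 1)\<^sup>2)\<^sup>2"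
proof -
  have "0 < sqrt a + 1"
    using real_sqrt_ge_zero[of a] assms by linarith
  then have pos: "0 < (sqrt a + 1)\<^sup>2"
    by simp
  have "4/3 * \<omega> = 4 * \<omega> * ((sqrt a + 1)\<^sup>2 / 3) / (sqrt a + 1)\<^sup>2"
    using pos by simp
  also have "\<dots> \<le> 4 * \<omega> * a / (sqrt a + 1)\<^sup>2"
    using sqrt_plus_one_sq_le[OF assms(1)] assms(3) pos
    by (intro divide_right_mono mult_left_mono) auto
  also have "\<dots> = 2 * a * (2 * \<omega> / (sqrt a + 1)\<^sup>2)"
    by simp
  also have "\<dots> \<le> (a + 2 * \<omega> / (sqrt a + 1)\<^sup>2)\<^sup>2 - a\<^sup>2"
    by (simp add: power2_sum)
  finally show ?thesis
    using assms(2) by linarith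
qed

lemma four_thirds_le_sqrt_mult:
  fixes k d :: real
  assumes "k * (d - 1) = 2/3" and "2 \<le> d"
  shows "4/3 \<le> sqrt k * 2 * d"
proof -
  have "0 < d - 1"
    using assms(2) by simp
  then have k: "k = 2 / (3 * (d - 1))"
    using assms(1) by (simp add: field_simps)
  have "2 * d \<le> d * d"
    using assms(2) by (intro mult_right_mono) auto
  then have "(2 / (3 * d))\<^sup>2 \<le> k"
    unfolding k using \<open>0 < d - 1\<close> assms(2) by (simp add: power2_eq_square field_simps)
      (use \<open>2 * d \<le> d * d\<close> in argo)
  then have "2 / (3 * d) \<le> sqrt k"
    by (simp add: real_le_rsqrt)
  then show ?thesis
    using assms(2) by (simp add: field_simps)
qed

lemma sq_growth_top:
  fixes b k d C \<omega> :: real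
  assumes "1 \<le> b" and "sqrt k * 2 * d * C \<le> b - k" and "4/3 \<le> sqrt k * 2 * d"
    and "0 \<le> C" and "\<omega> \<le> C * sqrt b"
  shows "k * b + 4/3 * \<omega> \<le> b\<^sup>2"
proof -
  have "b \<le> b * b"
    using assms(1) mult_right_mono[of 1 b b] by simp
  then have "sqrt b \<le> b"
    using assms(1) by (intro real_le_lsqrt) (simp_all add: power2_eq_square)
  have "0 \<le> C * sqrt b"
    using assms(1,4) by simp
  then have "4/3 * (C * sqrt b) \<le> sqrt k * 2 * d * (C * sqrt b)"
    using assms(3) by (rule mult_right_mono[rotated])
  then have "4/3 * \<omega> \<le> sqrt k * 2 * d * C * sqrt b"
    using assms(5) by (simp add: mult_ac)
  also have "\<dots> \<le> (b - k) * b"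
  proof (rule mult_mono)
    have "0 \<le> sqrt k * 2 * d * C"
      using assms(3,4) mult_nonneg_nonneg[of "sqrt k * 2 * d" C] by linarith
    then show "0 \<le> b - k"
      using assms(2) by linarith
  qed (use assms \<open>sqrt b \<le> b\<close> in auto)
  finally show ?thesis
    by (simp add: power2_eq_square algebra_simps)
qed

lemma eigenvalue_invariant_step:
  fixes a b a' b' \<omega> C k d lam0 :: real
  assumes "lam0 \<le> a" and "2 \<le> lam0" and "a \<le> b" and "k * b \<le> a\<^sup>2"
    and "0 \<le> \<omega>" and "\<omega> \<le> C * sqrt b" and "0 \<le> C"
    and kd: "k * (d - 1) = 2/3" and "2 \<le> d" and "sqrt k * 2 * d * C + k \<le> lam0"
    and a': "min (a + 2 * \<omega> / (sqrt a + 1)\<^sup>2) b \<le> a'"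
    and b': "b' \<le> b + 2 * (d - 1) * \<omega>"
  shows "lam0 \<le> a'" and "k * b' \<le> a'\<^sup>2"
proof -
  define m where "m = min (a + 2 * \<omega> / (sqrt a + 1)\<^sup>2) b"
  have "a \<le> m"
    unfolding m_def using assms(3,5) by simp
  then show "lam0 \<le> a'"
    using assms(1) a' unfolding m_def by linarith
  have "k * b + 4/3 * \<omega> \<le> m\<^sup>2"
  proof (cases "a + 2 * \<omega> / (sqrt a + 1)\<^sup>2 \<le> b")
    case True
    then show ?thesis
      unfolding m_def using sq_growth_interior assms(1,2,4,5) by simp
  next
    case False
    then have "m = b"
      unfolding m_def by simp
    moreover have "k * b + 4/3 * \<omega> \<le> b\<^sup>2"
      by (rule sq_growth_top) (use assms four_thirds_le_sqrt_mult[OF kd] in auto)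
    ultimately show ?thesis
      by simp
  qed
  moreover have "k * b' \<le> k * b + 4/3 * \<omega>"
  proof -
    have "0 \<le> k * (d - 1)"
      using kd by simp
    then have "0 \<le> k"
      using assms(9) by (simp add: zero_le_mult_iff)
    then have "k * b' \<le> k * (b + 2 * (d - 1) * \<omega>)"
      using b' by (rule mult_left_mono[rotated])
    also have "\<dots> = k * b + 2 * (k * (d - 1)) * \<omega>"
      by (simp add: algebra_simps)
    also have "\<dots> = k * b + 4/3 * \<omega>"
      unfolding kd by simp
    finally show ?thesis .
  qed
  moreover have "m\<^sup>2 \<le> a'\<^sup>2"
    using \<open>a \<le> m\<close> assms(1,2) a' unfolding m_def by (intro power_mono) auto
  ultimately show "k * b' \<le> a'\<^sup>2"
    by linarith
qed

lemma update_preserves_invariant: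
  fixes A B :: "real^'n^'n" and c :: "real^'n"
  assumes es: "sorted_eigensystem A l w" and es': "sorted_eigensystem B l' w'"
    and B: "B = A + \<omega> *\<^sub>R (\<Sum>i=1..CARD('n)-1. Pmat c (l 1) (w i))"
    and c: "norm c = 1" and \<omega>: "0 \<le> \<omega>" "\<omega> \<le> C * sqrt (l CARD('n))" and "0 \<le> C"
    and kd: "k * (real CARD('n) - 1) = 2/3" and d2: "2 \<le> CARD('n)"
    and lam0: "2 \<le> lam0" "sqrt k * 2 * real CARD('n) * C + k \<le> lam0"
    and inv: "lam0 \<le> l 1" "k * l CARD('n) \<le> (l 1)\<^sup>2"
  shows "lam0 \<le> l' 1 \<and> k * l' CARD('n) \<le> (l' 1)\<^sup>2"
proof -
  have "0 < l 1"
    using inv(1) lam0(1) by linarith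
  note bounds = update_eigenvalue_bounds[OF es es' B c this \<omega>(1)]
  have "l 1 \<le> l CARD('n)"
    using sorted_eigensystem_mono[OF es, of 1 "CARD('n)"] d2 by simp
  from eigenvalue_invariant_step[OF inv(1) lam0(1) this inv(2) \<omega> \<open>0 \<le> C\<close> kd _ lam0(2) bounds] d2
  show ?thesis
    by simp
qed

theorem theorem2:
  fixes c :: "nat \<Rightarrow> real^'n"
    and \<omega> :: "real^'n^'n \<Rightarrow> real"
    and C lam0 :: real
    and V :: "nat \<Rightarrow> real^'n^'n"
    and lam :: "nat \<Rightarrow> nat \<Rightarrow> real"
    and v :: "nat \<Rightarrow> nat \<Rightarrow> real^'n"
  assumes d2: "CARD('n) \<ge> 2"
    and unit: "\<forall>t. norm (c t) = 1"
    and Cpos: "C > 0"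
    and omega: "\<forall>X. psd X \<longrightarrow> 0 \<le> \<omega> X \<and> \<omega> X \<le> C * sqrt (lambda_max X)"
    and lam0_2: "lam0 \<ge> 2"
    and lam0_b: "lam0 \<ge> sqrt (2 / (3 * (real CARD('n) - 1))) * 2 * real CARD('n) * C
                          + 2 / (3 * (real CARD('n) - 1))"
    and V0: "V 0 = lam0 *\<^sub>R mat 1"
    and eig: "\<forall>t. sorted_eigensystem (V t) (lam t) (v t)"
    and step: "\<forall>t. V (Suc t) = V t + \<omega> (V t) *\<^sub>R
                      (\<Sum>i = 1..CARD('n) - 1. Pmat (c t) (lam t 1) (v t i))"
  shows "\<forall>t. lambda_min (V t) \<ge> sqrt (2 / (3 * (real CARD('n) - 1)) * lambda_max (V t))"
proof
  let ?d = "CARD('n)"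
  define k where "k = 2 / (3 * (real ?d - 1))"
  have "real ?d - 1 \<noteq> 0"
    using d2 by simp
  then have kd: "k * (real ?d - 1) = 2/3"
    unfolding k_def by (simp add: field_simps)
  have lam0_b: "sqrt k * 2 * real ?d * C + k \<le> lam0"
    using lam0_b unfolding k_def .
  have invariant: "lam0 \<le> lam t 1 \<and> k * lam t ?d \<le> (lam t 1)\<^sup>2" for t
  proof (induction t)
    case 0
    have "lam 0 1 = lam0" and "lam 0 ?d = lam0"
      using sorted_eigensystem_scalar_matrix[OF eig[rule_format, of 0, unfolded V0]] d2 by auto
    moreover have "k \<le> 2 / 3"
      unfolding k_def using d2 by (intro divide_left_mono) auto
    ultimately show ?case
      using lam0_2 by (simp add: power2_eq_square mult_right_mono)
  next
    case (Suc t)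
    have es: "sorted_eigensystem (V t) (lam t) (v t)"
      using eig by blast
    have "psd (V t)"
      using sorted_eigensystem_psd[OF es] Suc.IH lam0_2 by simp
    then have "0 \<le> \<omega> (V t)" and "\<omega> (V t) \<le> C * sqrt (lam t ?d)"
      using omega sorted_eigensystem_lambda_max[OF es] by auto
    with Suc.IH show ?case
      using update_preserves_invariant[OF es eig[rule_format, of "Suc t"] step[rule_format]]
        unit Cpos kd d2 lam0_2 lam0_b by simp
  qed
  fix t
  have "sqrt (k * lam t ?d) \<le> lam t 1"
    using invariant[of t] lam0_2 by (simp add: real_le_lsqrt)
  then show "sqrt (2 / (3 * (real ?d - 1)) * lambda_max (V t)) \<le> lambda_min (V t)"
    using eig sorted_eigensystem_lambda_min sorted_eigensystem_lambda_max unfolding k_def by metis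
qed

end
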